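(* Let $n\ge 1$ be an integer. Consider the graph consisting of two disjoint copies of the star $K_{1,n}$ together with one additional edge joining their two centres, where one centre is tinted blue, the other centre is tinted red, and all leaves are untinted. The game value of \textsc{Snort} played on this position is $\pm n=\{n\mid -n\}$ if $n$ is even, and $\pm(n* )=\{\,n+* \mid -n+*\,\}$ if $n$ is odd.
   Context: \textsc{Snort} is a two-player normal-play combinatorial game (the player unable to move loses) between Left (blue) and Right (red), played on a finite simple graph in which each vertex may be tinted blue, tinted red, or untinted. Left may move on any vertex not tinted red; Right may move on any vertex not tinted blue. A move on vertex $v$ deletes $v$ and tints all neighbours of $v$ in the mover's colour; any vertex that thereby becomes tinted in both colours is deleted. Game values are in the standard sense of combinatorial game theory: $\{A \mid B\}$ denotes the game with Left options $A$ and Right options $B$, $*=\{0\mid 0\}$, $n*$ denotes the sum $n+*$, and $\pm G$ denotes $\{G\mid -G\}$. $K_{1,n}$ is the star with one centre vertex adjacent to $n$ leaves. *)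

theory Defs
  imports Main
begin

datatype game = Game (lopts: "game list") (ropts: "game list")

lemma game_size_lopt[termination_simp]: "g \<in> set GL \<Longrightarrow> size g < size (Game GL GR)"
  by (induction GL) auto

lemma game_size_ropt[termination_simp]: "g \<in> set GR \<Longrightarrow> size g < size (Game GL GR)"
  by (induction GR) auto

function game_le :: "game \<Rightarrow> game \<Rightarrow> bool" where
  "game_le (Game GL GR) (Game HL HR) =
     ((\<forall>gl\<in>set GL. \<not> game_le (Game HL HR) gl) \<and>
      (\<forall>hr\<in>set HR. \<not> game_le hr (Game GL GR)))"
  by pat_completeness auto
termination
  by (relation "measure (\<lambda>(g,h). size g + size h)")
     (auto dest: game_size_lopt game_size_ropt)

definition game_eq :: "game \<Rightarrow> game \<Rightarrow> bool" where
  "game_eq G H \<longleftrightarrow> game_le G H \<and> game_le H G"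

fun game_neg :: "game \<Rightarrow> game" where
  "game_neg (Game GL GR) = Game (map game_neg GR) (map game_neg GL)"

function game_add :: "game \<Rightarrow> game \<Rightarrow> game" where
  "game_add (Game GL GR) (Game HL HR) =
     Game (map (\<lambda>gl. game_add gl (Game HL HR)) GL @ map (\<lambda>hl. game_add (Game GL GR) hl) HL)
          (map (\<lambda>gr. game_add gr (Game HL HR)) GR @ map (\<lambda>hr. game_add (Game GL GR) hr) HR)"
  by pat_completeness auto
termination
  by (relation "measure (\<lambda>(g,h). size g + size h)")
     (auto dest: game_size_lopt game_size_ropt)

definition game_zero :: game where "game_zero = Game [] []"

definition game_star :: game where "game_star = Game [game_zero] [game_zero]"

fun game_nat :: "nat \<Rightarrow> game" where
  "game_nat 0 = game_zero"
| "game_nat (Suc n) = Game [game_nat n] []"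

datatype tint = Untinted | Blue | Red

datatype player = Left | Right

fun pcol :: "player \<Rightarrow> tint" where
  "pcol Left = Blue" | "pcol Right = Red"

fun ocol :: "player \<Rightarrow> tint" where
  "ocol Left = Red" | "ocol Right = Blue"

text \<open>A position: finite vertex set V, edge relation E (symmetric, irreflexive;
  only edges between vertices of V are relevant), tint function t.
  The move deletes v, tints all neighbours of v in p's colour, and deletes
  neighbours that thereby become tinted in both colours (i.e. those already tinted
  in the opponent's colour).\<close>

definition nbrs :: "nat set \<Rightarrow> (nat \<Rightarrow> nat \<Rightarrow> bool) \<Rightarrow> nat \<Rightarrow> nat set" where
  "nbrs V E v = {u \<in> V. u \<noteq> v \<and> E v u}"

definition can_move :: "player \<Rightarrow> (nat \<Rightarrow> tint) \<Rightarrow> nat \<Rightarrow> bool" where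
  "can_move p t v \<longleftrightarrow> t v \<noteq> ocol p"

definition move_V :: "player \<Rightarrow> nat set \<Rightarrow> (nat \<Rightarrow> nat \<Rightarrow> bool) \<Rightarrow> (nat \<Rightarrow> tint) \<Rightarrow> nat \<Rightarrow> nat set" where
  "move_V p V E t v = V - {v} - {u \<in> nbrs V E v. t u = ocol p}"

definition move_t :: "player \<Rightarrow> nat set \<Rightarrow> (nat \<Rightarrow> nat \<Rightarrow> bool) \<Rightarrow> (nat \<Rightarrow> tint) \<Rightarrow> nat \<Rightarrow> (nat \<Rightarrow> tint)" where
  "move_t p V E t v = (\<lambda>u. if u \<in> nbrs V E v then pcol p else t u)"

text \<open>Game tree of a Snort position, computed with a fuel parameter; every move
  deletes at least one vertex, so fuel \<open>card V\<close> suffices for finite V.\<close>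
fun snort_aux :: "nat \<Rightarrow> nat set \<Rightarrow> (nat \<Rightarrow> nat \<Rightarrow> bool) \<Rightarrow> (nat \<Rightarrow> tint) \<Rightarrow> game" where
  "snort_aux 0 V E t = Game [] []"
| "snort_aux (Suc k) V E t =
     Game (map (\<lambda>v. snort_aux k (move_V Left V E t v) E (move_t Left V E t v))
               (filter (can_move Left t) (sorted_list_of_set V)))
          (map (\<lambda>v. snort_aux k (move_V Right V E t v) E (move_t Right V E t v))
               (filter (can_move Right t) (sorted_list_of_set V)))"

definition snort :: "nat set \<Rightarrow> (nat \<Rightarrow> nat \<Rightarrow> bool) \<Rightarrow> (nat \<Rightarrow> tint) \<Rightarrow> game" where
  "snort V E t = snort_aux (card V) V E t"

definition dstar_V :: "nat \<Rightarrow> nat set" where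
  "dstar_V n = {0 .. 2*n+1}"

definition dstar_E :: "nat \<Rightarrow> nat \<Rightarrow> nat \<Rightarrow> bool" where
  "dstar_E n u v \<longleftrightarrow>
     (u = 0 \<and> v = 1) \<or> (u = 1 \<and> v = 0) \<or>
     (u = 0 \<and> v \<in> {2 .. n+1}) \<or> (v = 0 \<and> u \<in> {2 .. n+1}) \<or>
     (u = 1 \<and> v \<in> {n+2 .. 2*n+1}) \<or> (v = 1 \<and> u \<in> {n+2 .. 2*n+1})"

definition dstar_t :: "nat \<Rightarrow> tint" where
  "dstar_t v = (if v = 0 then Blue else if v = 1 then Red else Untinted)"

end

theory Submission
  imports Defs
begin

(* Every position reachable from the double star is an edgeless graph, a star with one tinted
   centre plus isolated vertices, or a smaller double star; their values satisfy the recursions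
   defining edgeless_game, star_game and double_star_game. An edgeless position with k blue,
   r red and u untinted vertices is worth (k - r) + (u mod 2)*. In the double star with n leaves
   at each centre, Left's move on her centre, worth n + (n mod 2)*, dominates her other options,
   and symmetrically for Right. *)

section \<open>Order and equality of games\<close>

lemma game_le_iff:
  "game_le G H \<longleftrightarrow>
     (\<forall>gl\<in>set (lopts G). \<not> game_le H gl) \<and> (\<forall>hr\<in>set (ropts H). \<not> game_le hr G)"
  by (cases G; cases H) simp

lemma game_le_refl: "game_le G G"
proof (induction G)
  case (Game GL GR)
  then show ?case
    by (subst game_le_iff) (metis game.sel game_le_iff)
qed

lemma game_le_trans: "game_le G H \<Longrightarrow> game_le H K \<Longrightarrow> game_le G K"
proof (induction "size G + size H + size K" arbitrary: G H K rule: less_induct)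
  case less
  obtain GL GR HL HR KL KR where G: "G = Game GL GR" and H: "H = Game HL HR" and K: "K = Game KL KR"
    by (metis game.exhaust)
  show ?case
    unfolding G K game_le.simps
  proof (intro conjI ballI notI)
    fix gl assume gl: "gl \<in> set GL" and "game_le (Game KL KR) gl"
    then have "game_le H gl"
      using less.hyps[of H K gl] less.prems(2) game_size_lopt[OF gl] G K by simp
    with less.prems(1) gl show False unfolding G H by simp
  next
    fix kr assume kr: "kr \<in> set KR" and "game_le kr (Game GL GR)"
    then have "game_le kr H"
      using less.hyps[of kr G H] less.prems(1) game_size_ropt[OF kr] G K by simp
    with less.prems(2) kr show False unfolding K H by simp
  qed
qed

lemma not_game_le_lopt: "gl \<in> set (lopts G) \<Longrightarrow> \<not> game_le G gl"
  using game_le_refl[of G] game_le_iff by blast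

lemma not_ropt_game_le: "gr \<in> set (ropts G) \<Longrightarrow> \<not> game_le gr G"
  using game_le_refl[of G] game_le_iff by blast

lemma game_eq_refl: "game_eq G G"
  by (simp add: game_eq_def game_le_refl)

lemma game_eq_trans [trans]: "game_eq G H \<Longrightarrow> game_eq H K \<Longrightarrow> game_eq G K"
  unfolding game_eq_def by (meson game_le_trans)

lemma game_le_GameI:
  assumes "\<forall>gl\<in>set GL. \<exists>hl\<in>set HL. game_le gl hl"
    and "\<forall>hr\<in>set HR. \<exists>gr\<in>set GR. game_le gr hr"
  shows "game_le (Game GL GR) (Game HL HR)"
  unfolding game_le.simps
proof (intro conjI ballI notI)
  fix gl assume "gl \<in> set GL" and "game_le (Game HL HR) gl"
  then show False
    using assms(1) not_game_le_lopt[of _ "Game HL HR"] game_le_trans by fastforce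
next
  fix hr assume "hr \<in> set HR" and "game_le hr (Game GL GR)"
  then show False
    using assms(2) not_ropt_game_le[of _ "Game GL GR"] game_le_trans by fastforce
qed

lemma game_eq_GameI:
  assumes "rel_set game_eq (set GL) (set HL)" and "rel_set game_eq (set GR) (set HR)"
  shows "game_eq (Game GL GR) (Game HL HR)"
  using assms unfolding game_eq_def rel_set_def by (blast intro: game_le_GameI)

lemma game_eq_by_dominance:
  assumes "gl \<in> set GL" "\<forall>x\<in>set GL. game_le x gl"
    and "gr \<in> set GR" "\<forall>x\<in>set GR. game_le gr x"
  shows "game_eq (Game GL GR) (Game [gl] [gr])"
  unfolding game_eq_def using assms game_le_refl by (intro conjI game_le_GameI) auto

lemma game_neg_neg [simp]: "game_neg (game_neg G) = G"
  by (induction G) (simp add: map_idI)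

lemma game_neg_le_iff [simp]: "game_le (game_neg G) (game_neg H) \<longleftrightarrow> game_le H G"
proof (induction "size G + size H" arbitrary: G H rule: less_induct)
  case less
  obtain GL GR HL HR where G: "G = Game GL GR" and H: "H = Game HL HR"
    by (metis game.exhaust)
  have "\<And>gr. gr \<in> set GR \<Longrightarrow> game_le (game_neg H) (game_neg gr) \<longleftrightarrow> game_le gr H"
    using less.hyps game_size_ropt G by fastforce
  moreover have "\<And>hl. hl \<in> set HL \<Longrightarrow> game_le (game_neg hl) (game_neg G) \<longleftrightarrow> game_le G hl"
    using less.hyps game_size_lopt H by fastforce
  ultimately show ?case
    unfolding G H by auto
qed

lemma game_eq_neg: "game_eq G H \<Longrightarrow> game_eq (game_neg G) (game_neg H)"
  by (simp add: game_eq_def)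

section \<open>Values of the positions\<close>

(* Snort on k blue, r red and u untinted vertices without edges. *)
fun edgeless_game :: "nat \<Rightarrow> nat \<Rightarrow> nat \<Rightarrow> game" where
  "edgeless_game k r u =
     Game ((if 0 < k then [edgeless_game (k - 1) r u] else []) @
           (if 0 < u then [edgeless_game k r (u - 1)] else []))
          ((if 0 < r then [edgeless_game k (r - 1) u] else []) @
           (if 0 < u then [edgeless_game k r (u - 1)] else []))"

declare edgeless_game.simps [simp del]

lemma set_lopts_edgeless_game:
  "set (lopts (edgeless_game k r u)) =
     (if 0 < k then {edgeless_game (k - 1) r u} else {}) \<union>
     (if 0 < u then {edgeless_game k r (u - 1)} else {})"
  by (subst edgeless_game.simps) simp

lemma set_ropts_edgeless_game:
  "set (ropts (edgeless_game k r u)) =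
     (if 0 < r then {edgeless_game k (r - 1) u} else {}) \<union>
     (if 0 < u then {edgeless_game k r (u - 1)} else {})"
  by (subst edgeless_game.simps) simp

lemma game_neg_edgeless_game [simp]: "game_neg (edgeless_game k r u) = edgeless_game r k u"
proof (induction "k + r + u" arbitrary: k r u rule: less_induct)
  case less
  then show ?case
    by (subst (1 2) edgeless_game.simps) simp
qed

lemma edgeless_game_le_iff:
  "game_le (edgeless_game k r u) (edgeless_game k' r' u') \<longleftrightarrow>
     int k - int r < int k' - int r' \<or> (int k - int r = int k' - int r' \<and> even u = even u')"
proof (induction "k + r + u + k' + r' + u'" arbitrary: k r u k' r' u' rule: less_induct)
  case less
  let ?G = "edgeless_game k r u" and ?H = "edgeless_game k' r' u'"
  let ?d = "int k - int r" and ?d' = "int k' - int r'"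
  have IH_k: "game_le ?H (edgeless_game (k - 1) r u) \<longleftrightarrow>
      ?d' < ?d - 1 \<or> (?d' = ?d - 1 \<and> even u' = even u)" if "0 < k"
    using less.hyps[of k' r' u' "k - 1" r u] that by (simp add: of_nat_diff algebra_simps)
  have IH_u: "game_le ?H (edgeless_game k r (u - 1)) \<longleftrightarrow>
      ?d' < ?d \<or> (?d' = ?d \<and> even u' \<noteq> even u)" if "0 < u"
    using less.hyps[of k' r' u' k r "u - 1"] that by (auto simp: even_diff_nat)
  have IH_r': "game_le (edgeless_game k' (r' - 1) u') ?G \<longleftrightarrow>
      ?d' + 1 < ?d \<or> (?d' + 1 = ?d \<and> even u' = even u)" if "0 < r'"
    using less.hyps[of k' "r' - 1" u' k r u] that by (simp add: of_nat_diff algebra_simps)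
  have IH_u': "game_le (edgeless_game k' r' (u' - 1)) ?G \<longleftrightarrow>
      ?d' < ?d \<or> (?d' = ?d \<and> even u' \<noteq> even u)" if "0 < u'"
    using less.hyps[of k' r' "u' - 1" k r u] that by (auto simp: even_diff_nat)
  have "game_le ?G ?H \<longleftrightarrow>
      (0 < k \<longrightarrow> \<not> game_le ?H (edgeless_game (k - 1) r u)) \<and>
      (0 < u \<longrightarrow> \<not> game_le ?H (edgeless_game k r (u - 1))) \<and>
      (0 < r' \<longrightarrow> \<not> game_le (edgeless_game k' (r' - 1) u') ?G) \<and>
      (0 < u' \<longrightarrow> \<not> game_le (edgeless_game k' r' (u' - 1)) ?G)"
    by (subst game_le_iff) (auto simp: set_lopts_edgeless_game set_ropts_edgeless_game)
  also have "\<dots> \<longleftrightarrow>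
      (0 < k \<longrightarrow> \<not> (?d' < ?d - 1 \<or> (?d' = ?d - 1 \<and> even u' = even u))) \<and>
      (0 < u \<longrightarrow> \<not> (?d' < ?d \<or> (?d' = ?d \<and> even u' \<noteq> even u))) \<and>
      (0 < r' \<longrightarrow> \<not> (?d' + 1 < ?d \<or> (?d' + 1 = ?d \<and> even u' = even u))) \<and>
      (0 < u' \<longrightarrow> \<not> (?d' < ?d \<or> (?d' = ?d \<and> even u' \<noteq> even u)))"
    by (simp only: IH_k IH_u IH_r' IH_u' cong: imp_cong)
  also have "\<dots> \<longleftrightarrow> ?d < ?d' \<or> (?d = ?d' \<and> even u = even u')"
    by presburger
  finally show ?case .
qed

lemma edgeless_game_eqI:
  "int k - int r = int k' - int r' \<Longrightarrow> even u = even u' \<Longrightarrow>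
     game_eq (edgeless_game k r u) (edgeless_game k' r' u')"
  unfolding game_eq_def by (simp add: edgeless_game_le_iff)

lemma game_nat_eq_edgeless_game: "game_nat n = edgeless_game n 0 0"
  by (induction n) (subst edgeless_game.simps; simp add: game_zero_def)+

lemma game_add_zero [simp]: "game_add G game_zero = G"
  by (induction G) (auto simp: game_zero_def intro: map_idI)

lemma edgeless_game_add_star: "game_add (edgeless_game k r 0) game_star = edgeless_game k r 1"
proof (induction "k + r" arbitrary: k r rule: less_induct)
  case less
  then show ?case
    by (simp add: edgeless_game.simps[of k r 0] edgeless_game.simps[of k r "Suc 0"] game_star_def
        game_add_zero[unfolded game_zero_def])
qed

(* Snort on a star with blue centre and a untinted leaves, plus c isolated untinted vertices. *)
fun star_game :: "nat \<Rightarrow> nat \<Rightarrow> game" where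
  "star_game a c =
     Game ([edgeless_game a 0 c] @ (if 0 < a then [star_game (a - 1) c] else []) @
           (if 0 < c then [star_game a (c - 1)] else []))
          ((if 0 < a then [edgeless_game 0 0 (a - 1 + c)] else []) @
           (if 0 < c then [star_game a (c - 1)] else []))"

(* Snort on two stars with a and b untinted leaves whose adjacent centres are tinted blue and
   red respectively. *)
fun double_star_game :: "nat \<Rightarrow> nat \<Rightarrow> game" where
  "double_star_game a b =
     Game ([edgeless_game a 0 b] @ (if 0 < a then [double_star_game (a - 1) b] else []) @
           (if 0 < b then [star_game a (b - 1)] else []))
          ([edgeless_game 0 b a] @ (if 0 < b then [double_star_game a (b - 1)] else []) @
           (if 0 < a then [game_neg (star_game b (a - 1))] else []))"

declare star_game.simps [simp del] double_star_game.simps [simp del]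

lemma set_lopts_star_game:
  "set (lopts (star_game a c)) =
     {edgeless_game a 0 c} \<union> (if 0 < a then {star_game (a - 1) c} else {}) \<union>
     (if 0 < c then {star_game a (c - 1)} else {})"
  by (subst star_game.simps) auto

lemma set_ropts_star_game:
  "set (ropts (star_game a c)) =
     (if 0 < a then {edgeless_game 0 0 (a - 1 + c)} else {}) \<union>
     (if 0 < c then {star_game a (c - 1)} else {})"
  by (subst star_game.simps) auto

lemma set_lopts_double_star_game:
  "set (lopts (double_star_game a b)) =
     {edgeless_game a 0 b} \<union> (if 0 < a then {double_star_game (a - 1) b} else {}) \<union>
     (if 0 < b then {star_game a (b - 1)} else {})"
  by (subst double_star_game.simps) auto

lemma set_ropts_double_star_game:
  "set (ropts (double_star_game a b)) =
     {edgeless_game 0 b a} \<union> (if 0 < b then {double_star_game a (b - 1)} else {}) \<union>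
     (if 0 < a then {game_neg (star_game b (a - 1))} else {})"
  by (subst double_star_game.simps) auto

lemma game_neg_double_star_game [simp]: "game_neg (double_star_game a b) = double_star_game b a"
proof (induction "a + b" arbitrary: a b rule: less_induct)
  case less
  then show ?case
    by (subst (1 2) double_star_game.simps) simp
qed

lemma star_game_zero_eq: "game_eq (star_game 0 c) (edgeless_game 1 0 c)"
proof (induction c)
  case 0
  show ?case
    by (subst star_game.simps, subst edgeless_game.simps) (simp add: game_eq_refl)
next
  case (Suc c)
  then show ?case
    by (subst star_game.simps, subst edgeless_game.simps)
       (auto intro!: game_eq_GameI simp: rel_set_def game_eq_refl)
qed

lemma star_game_le:
  assumes "0 < a"
  shows "game_le (star_game a c) (edgeless_game a 0 (Suc c))"
  using assms
proof (induction "a + c" arbitrary: a c rule: less_induct)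
  case less
  have "\<exists>X. game_le gl X \<and> \<not> game_le (edgeless_game a 0 (Suc c)) X"
    if gl: "gl \<in> set (lopts (star_game a c))" for gl
  proof -
    consider "gl = edgeless_game a 0 c" | "a = 1" "gl = star_game 0 c"
      | "1 < a" "gl = star_game (a - 1) c" | "0 < c" "gl = star_game a (c - 1)"
      using gl less.prems by (fastforce simp: set_lopts_star_game split: if_splits)
    then show ?thesis
    proof cases
      case 1
      then show ?thesis by (intro exI[of _ gl]) (simp add: game_le_refl edgeless_game_le_iff)
    next
      case 2
      then show ?thesis
        using star_game_zero_eq[of c]
        by (intro exI[of _ "edgeless_game 1 0 c"]) (simp add: game_eq_def edgeless_game_le_iff)
    next
      case 3
      then show ?thesis
        using less.hyps[of "a - 1" c]
        by (intro exI[of _ "edgeless_game (a - 1) 0 (Suc c)"]) (simp add: edgeless_game_le_iff)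
    next
      case 4
      then show ?thesis
        using less.prems less.hyps[of a "c - 1"]
        by (intro exI[of _ "edgeless_game a 0 c"]) (simp add: edgeless_game_le_iff)
    qed
  qed
  then have "\<forall>gl\<in>set (lopts (star_game a c)). \<not> game_le (edgeless_game a 0 (Suc c)) gl"
    using game_le_trans by blast
  moreover have "\<not> game_le (edgeless_game a 0 c) (star_game a c)"
  proof -
    have "edgeless_game 0 0 (a - 1 + c) \<in> set (ropts (star_game a c))"
      using less.prems by (simp add: set_ropts_star_game)
    moreover have "game_le (edgeless_game 0 0 (a - 1 + c)) (edgeless_game a 0 c)"
      using less.prems by (simp add: edgeless_game_le_iff)
    ultimately show ?thesis
      using not_ropt_game_le game_le_trans by blast
  qed
  ultimately show ?case
    by (subst game_le_iff) (simp add: set_ropts_edgeless_game)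
qed

lemma double_star_game_le: "game_le (double_star_game a b) (edgeless_game (Suc a) 0 b)"
proof (induction "a + b" arbitrary: a b rule: less_induct)
  case less
  have "\<exists>X. game_le gl X \<and> \<not> game_le (edgeless_game (Suc a) 0 b) X"
    if gl: "gl \<in> set (lopts (double_star_game a b))" for gl
  proof -
    consider "gl = edgeless_game a 0 b" | "0 < a" "gl = double_star_game (a - 1) b"
      | "0 < b" "a = 0" "gl = star_game 0 (b - 1)" | "0 < b" "0 < a" "gl = star_game a (b - 1)"
      using gl by (fastforce simp: set_lopts_double_star_game split: if_splits)
    then show ?thesis
    proof cases
      case 1
      then show ?thesis by (intro exI[of _ gl]) (simp add: game_le_refl edgeless_game_le_iff)
    next
      case 2
      then show ?thesis
        using less.hyps[of "a - 1" b]
        by (intro exI[of _ "edgeless_game a 0 b"]) (simp add: edgeless_game_le_iff)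
    next
      case 3
      then show ?thesis
        using star_game_zero_eq[of "b - 1"]
        by (intro exI[of _ "edgeless_game 1 0 (b - 1)"]) (simp add: game_eq_def edgeless_game_le_iff)
    next
      case 4
      then show ?thesis
        using star_game_le[of a "b - 1"]
        by (intro exI[of _ "edgeless_game a 0 b"]) (simp add: edgeless_game_le_iff)
    qed
  qed
  then have "\<forall>gl\<in>set (lopts (double_star_game a b)). \<not> game_le (edgeless_game (Suc a) 0 b) gl"
    using game_le_trans by blast
  moreover have "\<not> game_le hr (double_star_game a b)"
    if "hr \<in> set (ropts (edgeless_game (Suc a) 0 b))" for hr
  proof -
    have "edgeless_game 0 b a \<in> set (ropts (double_star_game a b))"
      by (simp add: set_ropts_double_star_game)
    moreover have "game_le (edgeless_game 0 b a) hr"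
      using that by (auto simp: set_ropts_edgeless_game edgeless_game_le_iff split: if_splits)
    ultimately show ?thesis
      using not_ropt_game_le game_le_trans by blast
  qed
  ultimately show ?case
    by (subst game_le_iff) simp
qed

lemma double_star_game_diag_eq:
  assumes "0 < n"
  shows "game_eq (double_star_game n n) (Game [edgeless_game n 0 n] [edgeless_game 0 n n])"
proof -
  have "game_le (double_star_game (n - 1) n) (edgeless_game n 0 n)"
    using double_star_game_le[of "n - 1" n] assms by simp
  moreover have "game_le (star_game n (n - 1)) (edgeless_game n 0 n)"
    using star_game_le[of n "n - 1"] assms by simp
  ultimately have "\<forall>x\<in>set (lopts (double_star_game n n)). game_le x (edgeless_game n 0 n)"
    and "\<forall>x\<in>set (ropts (double_star_game n n)). game_le (edgeless_game 0 n n) x"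
    using assms game_neg_le_iff[of "edgeless_game n 0 n" "double_star_game (n - 1) n"]
      game_neg_le_iff[of "edgeless_game n 0 n" "star_game n (n - 1)"]
    by (auto simp: set_lopts_double_star_game set_ropts_double_star_game game_le_refl)
  then show ?thesis
    using game_eq_by_dominance[of "edgeless_game n 0 n" "lopts (double_star_game n n)"
        "edgeless_game 0 n n" "ropts (double_star_game n n)"]
    by (simp add: set_lopts_double_star_game set_ropts_double_star_game)
qed

section \<open>Snort positions\<close>

fun tint_swap :: "tint \<Rightarrow> tint" where
  "tint_swap Untinted = Untinted"
| "tint_swap Blue = Red"
| "tint_swap Red = Blue"

lemma tint_swap_eq_iff: "tint_swap c = d \<longleftrightarrow> c = tint_swap d"
  by (cases c; cases d) simp_all

abbreviation snort_option ::
  "player \<Rightarrow> nat \<Rightarrow> nat set \<Rightarrow> (nat \<Rightarrow> nat \<Rightarrow> bool) \<Rightarrow> (nat \<Rightarrow> tint) \<Rightarrow> nat \<Rightarrow> game" where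
  "snort_option p f V E t v \<equiv> snort_aux f (move_V p V E t v) E (move_t p V E t v)"

lemma snort_aux_tint_swap: "snort_aux f V E (tint_swap \<circ> t) = game_neg (snort_aux f V E t)"
proof (induction f arbitrary: V t)
  case 0
  then show ?case by simp
next
  case (Suc f)
  have can_move: "can_move Left (tint_swap \<circ> t) = can_move Right t"
    "can_move Right (tint_swap \<circ> t) = can_move Left t"
    by (auto simp: can_move_def tint_swap_eq_iff)
  have move_V: "move_V Left V E (tint_swap \<circ> t) = move_V Right V E t"
    "move_V Right V E (tint_swap \<circ> t) = move_V Left V E t"
    by (auto simp: move_V_def tint_swap_eq_iff)
  have move_t: "move_t Left V E (tint_swap \<circ> t) v = tint_swap \<circ> move_t Right V E t v"
    "move_t Right V E (tint_swap \<circ> t) v = tint_swap \<circ> move_t Left V E t v" for v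
    by (auto simp: move_t_def)
  show ?case
    unfolding snort_aux.simps game_neg.simps can_move move_V move_t Suc.IH
    by (simp add: comp_def)
qed

lemma snort_option_tint_swap:
  "snort_option Right f V E t v = game_neg (snort_option Left f V E (tint_swap \<circ> t) v)"
proof -
  have "tint_swap \<circ> move_t Left V E (tint_swap \<circ> t) v = move_t Right V E t v"
    by (auto simp: move_t_def fun_eq_iff tint_swap_eq_iff)
  moreover have "move_V Left V E (tint_swap \<circ> t) v = move_V Right V E t v"
    by (auto simp: move_V_def tint_swap_eq_iff)
  ultimately show ?thesis
    by (metis snort_aux_tint_swap)
qed

lemma snort_aux_Suc_eqI:
  assumes "finite V"
    and "\<And>v. v \<in> V \<Longrightarrow> can_move Left t v \<Longrightarrow> game_eq (snort_option Left f V E t v) (GL v)"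
    and "\<And>v. v \<in> V \<Longrightarrow> can_move Right t v \<Longrightarrow> game_eq (snort_option Right f V E t v) (GR v)"
    and "set (lopts G) = GL ` {v \<in> V. can_move Left t v}"
    and "set (ropts G) = GR ` {v \<in> V. can_move Right t v}"
  shows "game_eq (snort_aux (Suc f) V E t) G"
proof -
  have "rel_set game_eq (snort_option Left f V E t ` {v \<in> V. can_move Left t v}) (set (lopts G))"
    and "rel_set game_eq (snort_option Right f V E t ` {v \<in> V. can_move Right t v}) (set (ropts G))"
    using assms(2-5) by (auto simp: rel_set_def)
  then show ?thesis
    using game_eq_GameI[of _ "lopts G" _ "ropts G"] assms(1) by simp
qed

lemma nbrs_Diff: "nbrs (V - A) E v = nbrs V E v - A"
  by (auto simp: nbrs_def)

lemma finite_nbrs [simp]: "finite V \<Longrightarrow> finite (nbrs V E v)"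
  by (simp add: nbrs_def)

lemma move_isolated:
  assumes "nbrs V E v = {}"
  shows "move_V p V E t v = V - {v}" and "move_t p V E t v = t"
  using assms by (auto simp: move_V_def move_t_def)

lemma move_leaf_own:
  assumes "nbrs V E v = {w}" and "t w = pcol p"
  shows "move_V p V E t v = V - {v}" and "move_t p V E t v = t"
  using assms by (cases p; auto simp: move_V_def move_t_def)+

lemma move_leaf_other:
  assumes "nbrs V E v = {w}" and "t w = ocol p"
  shows "move_V p V E t v = V - {v} - {w}" and "\<And>u. u \<noteq> w \<Longrightarrow> move_t p V E t v u = t u"
  using assms by (cases p; auto simp: move_V_def move_t_def)+

definition tint_count :: "tint \<Rightarrow> nat set \<Rightarrow> (nat \<Rightarrow> tint) \<Rightarrow> nat" where
  "tint_count c V t = card {v \<in> V. t v = c}"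

lemma tint_count_remove:
  assumes "finite V" and "v \<in> V"
  shows "tint_count c (V - {v}) t = (if t v = c then tint_count c V t - 1 else tint_count c V t)"
proof -
  have "{u \<in> V - {v}. t u = c} = {u \<in> V. t u = c} - {v}"
    by auto
  then show ?thesis
    using assms by (simp add: tint_count_def card_Diff_singleton_if)
qed

lemma tint_count_pos_iff: "finite V \<Longrightarrow> 0 < tint_count c V t \<longleftrightarrow> (\<exists>v\<in>V. t v = c)"
  by (auto simp: tint_count_def card_gt_0_iff)

lemma tint_count_all: "\<forall>u\<in>V. t u = c \<Longrightarrow> tint_count c V t = card V"
  unfolding tint_count_def by (metis (mono_tags, lifting) Collect_mem_eq Collect_cong)

lemma tint_count_none: "\<forall>u\<in>V. t u \<noteq> c \<Longrightarrow> tint_count c V t = 0"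
  unfolding tint_count_def by (metis (mono_tags, lifting) card.empty empty_Collect_eq)

lemma image_if_two_pieces:
  assumes "finite A" and "finite B" and "A \<inter> B = {}"
  shows "(\<lambda>v. if v \<in> A then g else h) ` (A \<union> B) =
           (if 0 < card A then {g} else {}) \<union> (if 0 < card B then {h} else {})"
  using assms by (auto simp: card_gt_0_iff)

lemma image_if_three_pieces:
  assumes "finite A" and "finite B" and "A \<inter> B = {}" and "x \<notin> A \<union> B"
  shows "(\<lambda>v. if v = x then f else if v \<in> A then g else h) ` insert x (A \<union> B) =
           {f} \<union> (if 0 < card A then {g} else {}) \<union> (if 0 < card B then {h} else {})"
  using assms by (auto simp: card_gt_0_iff)

lemma image_comp_fibre:
  "(\<lambda>v. g (t v)) ` {v \<in> V. t v = c} = (if \<exists>v\<in>V. t v = c then {g c} else {})"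
  by auto

lemma snort_aux_edgeless:
  assumes "finite V" and "card V \<le> f" and "\<forall>v\<in>V. nbrs V E v = {}"
  shows "game_eq (snort_aux f V E t)
           (edgeless_game (tint_count Blue V t) (tint_count Red V t) (tint_count Untinted V t))"
  using assms
proof (induction f arbitrary: V)
  case 0
  then show ?case
    by (simp add: tint_count_def edgeless_game.simps game_eq_refl)
next
  case (Suc f)
  let ?k = "tint_count Blue V t" and ?r = "tint_count Red V t" and ?u = "tint_count Untinted V t"
  define opt_tint where "opt_tint c = (case c of
      Blue \<Rightarrow> edgeless_game (?k - 1) ?r ?u
    | Red \<Rightarrow> edgeless_game ?k (?r - 1) ?u
    | Untinted \<Rightarrow> edgeless_game ?k ?r (?u - 1))" for c
  have movable: "{v \<in> V. can_move Left t v} = {v \<in> V. t v = Blue} \<union> {v \<in> V. t v = Untinted}"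
    "{v \<in> V. can_move Right t v} = {v \<in> V. t v = Red} \<union> {v \<in> V. t v = Untinted}"
    by (auto simp: can_move_def intro: tint.exhaust)
  have option: "game_eq (snort_option p f V E t v) (opt_tint (t v))" if "v \<in> V" for p v
  proof -
    have "game_eq (snort_option p f V E t v) (edgeless_game (tint_count Blue (V - {v}) t)
        (tint_count Red (V - {v}) t) (tint_count Untinted (V - {v}) t))"
      using Suc that by (auto simp: move_isolated nbrs_Diff intro!: Suc.IH)
    then show ?thesis
      using Suc.prems(1) that by (cases "t v") (simp_all add: opt_tint_def tint_count_remove)
  qed
  show ?case
  proof (rule snort_aux_Suc_eqI[where GL = "\<lambda>v. opt_tint (t v)" and GR = "\<lambda>v. opt_tint (t v)"])
    show "set (lopts (edgeless_game ?k ?r ?u)) = (\<lambda>v. opt_tint (t v)) ` {v \<in> V. can_move Left t v}"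
      unfolding movable image_Un image_comp_fibre
      using Suc.prems(1) by (simp add: tint_count_pos_iff set_lopts_edgeless_game opt_tint_def)
  next
    show "set (ropts (edgeless_game ?k ?r ?u)) = (\<lambda>v. opt_tint (t v)) ` {v \<in> V. can_move Right t v}"
      unfolding movable image_Un image_comp_fibre
      using Suc.prems(1) by (simp add: tint_count_pos_iff set_ropts_edgeless_game opt_tint_def)
  qed (use Suc.prems option in simp_all)
qed

definition star_position ::
  "nat set \<Rightarrow> (nat \<Rightarrow> nat \<Rightarrow> bool) \<Rightarrow> (nat \<Rightarrow> tint) \<Rightarrow> nat \<Rightarrow> bool" where
  "star_position V E t x \<longleftrightarrow> x \<in> V \<and> (\<forall>u\<in>V - {x}. t u = Untinted \<and> nbrs V E u \<subseteq> {x})"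

lemma star_position_nbrs:
  assumes "symp E" and "star_position V E t x" and "u \<in> V - {x}"
  shows "nbrs V E u = (if u \<in> nbrs V E x then {x} else {})"
  using assms by (auto simp: star_position_def nbrs_def dest: sympD)

lemma star_position_Diff:
  "star_position V E t x \<Longrightarrow> v \<noteq> x \<Longrightarrow> star_position (V - {v}) E t x"
  by (auto simp: star_position_def nbrs_Diff)

lemma snort_option_blue_star_centre:
  assumes "symp E" and "finite V" and "card V \<le> Suc f" and "star_position V E t x" and "t x = Blue"
  shows "game_eq (snort_option Left f V E t x)
           (edgeless_game (card (nbrs V E x)) 0 (card (V - {x} - nbrs V E x)))"
proof -
  let ?N = "nbrs V E x" and ?t = "move_t Left V E t x"
  have x: "x \<in> V" and untinted: "\<And>u. u \<in> V - {x} \<Longrightarrow> t u = Untinted"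
    using assms(4) by (auto simp: star_position_def)
  have "?N \<subseteq> V - {x}"
    by (auto simp: nbrs_def)
  then have "move_V Left V E t x = V - {x}"
    using untinted by (auto simp: move_V_def)
  moreover have "game_eq (snort_aux f (V - {x}) E ?t)
      (edgeless_game (tint_count Blue (V - {x}) ?t) (tint_count Red (V - {x}) ?t)
        (tint_count Untinted (V - {x}) ?t))"
  proof (rule snort_aux_edgeless)
    show "card (V - {x}) \<le> f"
      using assms(2,3) x by simp
    show "\<forall>u\<in>V - {x}. nbrs (V - {x}) E u = {}"
      using star_position_nbrs[OF assms(1,4)] by (simp add: nbrs_Diff)
  qed (use assms(2) in simp)
  moreover have "{u \<in> V - {x}. ?t u = Blue} = ?N" "{u \<in> V - {x}. ?t u = Red} = {}"
    "{u \<in> V - {x}. ?t u = Untinted} = V - {x} - ?N"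
    using \<open>?N \<subseteq> V - {x}\<close> untinted by (auto simp: move_t_def)
  ultimately show ?thesis
    by (simp only: tint_count_def card.empty)
qed

lemma snort_option_blue_star_leaf:
  assumes "symp E" and "finite V" and "card V \<le> Suc f" and "star_position V E t x" and "t x = Blue"
    and "v \<in> nbrs V E x"
  shows "game_eq (snort_option Right f V E t v) (edgeless_game 0 0 (card V - 2))"
proof -
  let ?W = "V - {v} - {x}" and ?t = "move_t Right V E t v"
  have x: "x \<in> V" and untinted: "\<And>u. u \<in> V - {x} \<Longrightarrow> t u = Untinted"
    using assms(4) by (auto simp: star_position_def)
  have v: "v \<in> V - {x}"
    using assms(6) by (auto simp: nbrs_def)
  then have nbrs_v: "nbrs V E v = {x}"
    using star_position_nbrs[OF assms(1,4)] assms(6) by simp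
  have "game_eq (snort_aux f ?W E ?t)
      (edgeless_game (tint_count Blue ?W ?t) (tint_count Red ?W ?t) (tint_count Untinted ?W ?t))"
  proof (rule snort_aux_edgeless)
    show "card ?W \<le> f"
      using assms(2,3) x v by (simp add: card_Diff_singleton_if)
    show "\<forall>u\<in>?W. nbrs ?W E u = {}"
      using star_position_nbrs[OF assms(1,4)] by (auto simp: nbrs_Diff)
  qed (use assms(2) in simp)
  moreover have "\<forall>u\<in>?W. ?t u = Untinted"
    using untinted move_leaf_other(2)[OF nbrs_v] assms(5) by simp
  moreover have "card ?W = card V - 2"
    using assms(2) x v by (simp add: card_Diff_singleton_if)
  ultimately show ?thesis
    using assms(5) by (simp add: move_leaf_other(1)[OF nbrs_v] tint_count_all tint_count_none)
qed

lemma snort_option_star_untouched: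
  assumes "symp E" and "star_position V E t x" and "t x = Blue" and "v \<in> V - {x}"
    and "p = Left \<or> v \<notin> nbrs V E x"
  shows "snort_option p f V E t v = snort_aux f (V - {v}) E t"
  using star_position_nbrs[OF assms(1,2,4)] assms(3,5)
  by (cases "v \<in> nbrs V E x") (auto simp: move_isolated move_leaf_own)

lemma snort_aux_blue_star:
  assumes "symp E" and "finite V" and "card V \<le> f" and "star_position V E t x" and "t x = Blue"
  shows "game_eq (snort_aux f V E t) (star_game (card (nbrs V E x)) (card (V - {x} - nbrs V E x)))"
  using assms(2-5)
proof (induction f arbitrary: V)
  case 0
  then show ?case
    by (simp add: star_position_def card_gt_0_iff)
next
  case (Suc f)
  define N where "N = nbrs V E x"
  define I where "I = V - {x} - N"
  let ?a = "card N" and ?c = "card I"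
  have x: "x \<in> V" "x \<notin> N \<union> I" and V_minus_x: "V - {x} = N \<union> I" and "N \<inter> I = {}"
    using Suc.prems(3) by (auto simp: star_position_def N_def I_def nbrs_def)
  have "finite N" "finite I"
    using Suc.prems(1) by (simp_all add: N_def I_def)
  have removal: "game_eq (snort_option p f V E t v) (star_game (card (N - {v})) (card (I - {v})))"
    if "v \<in> V - {x}" and "p = Left \<or> v \<in> I" for p v
  proof -
    have "snort_option p f V E t v = snort_aux f (V - {v}) E t"
      using snort_option_star_untouched[OF assms(1) Suc.prems(3,4) that(1)] that(2) \<open>N \<inter> I = {}\<close>
      by (auto simp: N_def)
    moreover have "nbrs (V - {v}) E x = N - {v}" and "V - {v} - {x} - (N - {v}) = I - {v}"
      by (auto simp: nbrs_Diff N_def I_def)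
    moreover have "card (V - {v}) \<le> f"
      using Suc.prems(1,2) that(1) by (simp add: card_Diff_singleton_if)
    ultimately show ?thesis
      using Suc.prems(1,4) that(1) Suc.IH[of "V - {v}"] star_position_Diff[OF Suc.prems(3)] by simp
  qed
  define GL where "GL = (\<lambda>v. if v = x then edgeless_game ?a 0 ?c
      else if v \<in> N then star_game (?a - 1) ?c else star_game ?a (?c - 1))"
  define GR where "GR = (\<lambda>v. if v \<in> N then edgeless_game 0 0 (?a - 1 + ?c) else star_game ?a (?c - 1))"
  have "card (V - {x}) = ?a + ?c"
    unfolding V_minus_x using \<open>finite N\<close> \<open>finite I\<close> \<open>N \<inter> I = {}\<close> by (rule card_Un_disjoint)
  then have card_V: "card V = Suc (?a + ?c)"
    using card_Suc_Diff1[OF Suc.prems(1) x(1)] by simp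
  show ?case
    unfolding N_def[symmetric] I_def[symmetric]
  proof (rule snort_aux_Suc_eqI[where GL = GL and GR = GR])
    show "game_eq (snort_option Left f V E t v) (GL v)" if "v \<in> V" for v
    proof (cases "v = x")
      case True
      then show ?thesis
        using snort_option_blue_star_centre[OF assms(1) Suc.prems] by (simp add: GL_def N_def I_def)
    next
      case False
      then show ?thesis
        using removal[of v Left] that V_minus_x \<open>N \<inter> I = {}\<close> \<open>finite N\<close> \<open>finite I\<close>
        by (cases "v \<in> N") (auto simp: GL_def disjoint_iff)
    qed
    show "game_eq (snort_option Right f V E t v) (GR v)" if "v \<in> V" "can_move Right t v" for v
    proof (cases "v \<in> N")
      case True
      then have "0 < ?a"
        using \<open>finite N\<close> card_gt_0_iff by blast
      then show ?thesis
        using snort_option_blue_star_leaf[OF assms(1) Suc.prems] True card_V by (simp add: GR_def N_def)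
    next
      case False
      moreover have "v \<noteq> x"
        using that Suc.prems(4) by (auto simp: can_move_def)
      ultimately show ?thesis
        using removal[of v Right] that V_minus_x \<open>finite I\<close> by (auto simp: GR_def)
    qed
    have movable: "{v \<in> V. can_move Left t v} = insert x (N \<union> I)"
      "{v \<in> V. can_move Right t v} = N \<union> I"
      using x V_minus_x Suc.prems(3,4) by (auto simp: can_move_def star_position_def)
    show "set (lopts (star_game ?a ?c)) = GL ` {v \<in> V. can_move Left t v}"
      and "set (ropts (star_game ?a ?c)) = GR ` {v \<in> V. can_move Right t v}"
      unfolding movable GL_def GR_def
        image_if_three_pieces[OF \<open>finite N\<close> \<open>finite I\<close> \<open>N \<inter> I = {}\<close> x(2)]
        image_if_two_pieces[OF \<open>finite N\<close> \<open>finite I\<close> \<open>N \<inter> I = {}\<close>]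
      by (simp_all add: set_lopts_star_game set_ropts_star_game)
  qed (use Suc.prems(1) in simp)
qed

definition double_star_position ::
  "nat set \<Rightarrow> (nat \<Rightarrow> nat \<Rightarrow> bool) \<Rightarrow> (nat \<Rightarrow> tint) \<Rightarrow> nat \<Rightarrow> nat \<Rightarrow> bool" where
  "double_star_position V E t x y \<longleftrightarrow> x \<in> V \<and> y \<in> nbrs V E x \<and> t x = Blue \<and> t y = Red \<and>
     (\<forall>u\<in>V - {x, y}. t u = Untinted \<and> (nbrs V E u = {x} \<or> nbrs V E u = {y}))"

lemma double_star_position_tint_swap:
  assumes "symp E" and "double_star_position V E t x y"
  shows "double_star_position V E (tint_swap \<circ> t) y x"
proof -
  have "x \<in> nbrs V E y" and "y \<in> V"
    using assms by (auto simp: double_star_position_def nbrs_def dest: sympD)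
  then show ?thesis
    using assms(2) unfolding double_star_position_def by (auto simp: insert_commute)
qed

lemma double_star_position_Diff:
  "double_star_position V E t x y \<Longrightarrow> v \<noteq> x \<Longrightarrow> v \<noteq> y \<Longrightarrow>
     double_star_position (V - {v}) E t x y"
  by (auto simp: double_star_position_def nbrs_Diff)

lemma double_star_position_nbrs:
  assumes "symp E" and "double_star_position V E t x y" and "u \<in> V - {x, y}"
  shows "nbrs V E u = (if u \<in> nbrs V E x then {x} else {y})"
proof -
  have "x \<in> V" and "x \<noteq> y" and "nbrs V E u = {x} \<or> nbrs V E u = {y}"
    using assms(2,3) by (auto simp: double_star_position_def nbrs_def)
  moreover have "x \<in> nbrs V E u \<longleftrightarrow> u \<in> nbrs V E x"
    using assms(1,3) \<open>x \<in> V\<close> by (auto simp: nbrs_def dest: sympD)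
  ultimately show ?thesis
    by auto
qed

lemma double_star_position_leaves:
  assumes "symp E" and "double_star_position V E t x y"
  shows "V - {x, y} = (nbrs V E x - {y}) \<union> (nbrs V E y - {x})"
    and "(nbrs V E x - {y}) \<inter> (nbrs V E y - {x}) = {}"
proof -
  have "y \<in> V" "x \<noteq> y"
    using assms(2) by (auto simp: double_star_position_def nbrs_def)
  have exclusive: "u \<in> nbrs V E y \<longleftrightarrow> u \<notin> nbrs V E x" if "u \<in> V - {x, y}" for u
  proof -
    have "u \<in> nbrs V E y \<longleftrightarrow> y \<in> nbrs V E u"
      using assms(1) that \<open>y \<in> V\<close> by (auto simp: nbrs_def dest: sympD)
    then show ?thesis
      using double_star_position_nbrs[OF assms that] \<open>x \<noteq> y\<close> by simp
  qed
  moreover have "nbrs V E x \<subseteq> V - {x}" and "nbrs V E y \<subseteq> V - {y}"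
    by (auto simp: nbrs_def)
  ultimately show "V - {x, y} = (nbrs V E x - {y}) \<union> (nbrs V E y - {x})"
    and "(nbrs V E x - {y}) \<inter> (nbrs V E y - {x}) = {}"
    by blast+
qed

lemma snort_option_double_star_centre:
  assumes "symp E" and "finite V" and "card V \<le> Suc f" and "double_star_position V E t x y"
  shows "game_eq (snort_option Left f V E t x)
           (edgeless_game (card (nbrs V E x - {y})) 0 (card (nbrs V E y - {x})))"
proof -
  let ?A = "nbrs V E x - {y}" and ?B = "nbrs V E y - {x}" and ?t = "move_t Left V E t x"
  have xy: "x \<in> V" "y \<in> nbrs V E x" "t x = Blue" "t y = Red"
    and untinted: "\<And>u. u \<in> ?A \<union> ?B \<Longrightarrow> t u = Untinted"
    using assms(4) double_star_position_leaves(1)[OF assms(1,4)]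
    by (auto simp: double_star_position_def)
  note leaves = double_star_position_leaves[OF assms(1,4)]
  have "{u \<in> nbrs V E x. t u = Red} = {y}"
  proof (intro equalityI subsetI)
    fix u assume "u \<in> {u \<in> nbrs V E x. t u = Red}"
    then show "u \<in> {y}"
      using untinted[of u] by (cases "u = y") auto
  qed (use xy in simp)
  then have move_V: "move_V Left V E t x = V - {x, y}"
    by (auto simp: move_V_def)
  have t_A: "?t u = Blue" if "u \<in> ?A" for u
    using that by (simp add: move_t_def)
  have t_B: "?t u = Untinted" if "u \<in> ?B" for u
  proof -
    have "u \<notin> nbrs V E x"
      using that leaves(2) by (auto simp: nbrs_def)
    then show ?thesis
      using that untinted by (simp add: move_t_def)
  qed
  have "game_eq (snort_aux f (V - {x, y}) E ?t)
      (edgeless_game (tint_count Blue (V - {x, y}) ?t) (tint_count Red (V - {x, y}) ?t)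
        (tint_count Untinted (V - {x, y}) ?t))"
  proof (rule snort_aux_edgeless)
    have "card (V - {x, y}) < card V"
      using assms(2) xy(1) by (intro psubset_card_mono) auto
    then show "card (V - {x, y}) \<le> f"
      using assms(3) by simp
    show "\<forall>u\<in>V - {x, y}. nbrs (V - {x, y}) E u = {}"
      using double_star_position_nbrs[OF assms(1,4)] by (simp add: nbrs_Diff)
  qed (use assms(2) in simp)
  moreover have "{u \<in> V - {x, y}. ?t u = Blue} = ?A" "{u \<in> V - {x, y}. ?t u = Red} = {}"
    "{u \<in> V - {x, y}. ?t u = Untinted} = ?B"
    unfolding leaves(1) using t_A t_B leaves(2) by auto
  ultimately show ?thesis
    unfolding move_V by (simp only: tint_count_def card.empty)
qed

lemma snort_option_double_star_other_leaf:
  assumes "symp E" and "finite V" and "card V \<le> Suc f" and "double_star_position V E t x y"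
    and "v \<in> nbrs V E y - {x}"
  shows "game_eq (snort_option Left f V E t v)
           (star_game (card (nbrs V E x - {y})) (card (nbrs V E y - {x}) - 1))"
proof -
  let ?A = "nbrs V E x - {y}" and ?B = "nbrs V E y - {x}"
  let ?W = "V - {v} - {y}" and ?t = "move_t Left V E t v"
  note leaves = double_star_position_leaves[OF assms(1,4)]
  have xy: "x \<in> V" "t x = Blue" "t y = Red" "x \<noteq> y"
    and untinted: "\<And>u. u \<in> V - {x, y} \<Longrightarrow> t u = Untinted"
    using assms(4) by (auto simp: double_star_position_def nbrs_def)
  have v: "v \<in> V - {x, y}" "v \<notin> nbrs V E x"
    using assms(5) leaves by auto
  then have nbrs_v: "nbrs V E v = {y}"
    using double_star_position_nbrs[OF assms(1,4)] by simp
  have t_W: "?t u = t u" if "u \<noteq> y" for u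
    using move_leaf_other(2)[OF nbrs_v] xy(3) that by simp
  have "star_position ?W E ?t x"
    unfolding star_position_def
  proof (intro conjI ballI)
    show "x \<in> ?W"
      using xy v by auto
    fix u assume u: "u \<in> ?W - {x}"
    then show "?t u = Untinted"
      using t_W untinted by auto
    show "nbrs ?W E u \<subseteq> {x}"
      using double_star_position_nbrs[OF assms(1,4), of u] u by (auto simp: nbrs_Diff)
  qed
  moreover have "card ?W \<le> f"
  proof -
    have "card ?W < card V"
      using assms(2) v by (intro psubset_card_mono) auto
    then show ?thesis
      using assms(3) by simp
  qed
  ultimately have "game_eq (snort_aux f ?W E ?t)
      (star_game (card (nbrs ?W E x)) (card (?W - {x} - nbrs ?W E x)))"
    using assms(1,2) t_W xy by (intro snort_aux_blue_star) auto
  moreover have "nbrs ?W E x = ?A"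
    using v by (auto simp: nbrs_Diff)
  moreover have "?W - {x} - ?A = ?B - {v}"
    using leaves by blast
  ultimately show ?thesis
    using assms(5) move_leaf_other(1)[OF nbrs_v] xy(3) by simp
qed

lemma snort_option_double_star_own_leaf:
  assumes "symp E" and "double_star_position V E t x y" and "v \<in> nbrs V E x - {y}"
  shows "snort_option Left f V E t v = snort_aux f (V - {v}) E t"
    and "double_star_position (V - {v}) E t x y"
    and "nbrs (V - {v}) E x - {y} = (nbrs V E x - {y}) - {v}"
    and "nbrs (V - {v}) E y - {x} = nbrs V E y - {x}"
proof -
  note leaves = double_star_position_leaves[OF assms(1,2)]
  have v: "v \<in> V - {x, y}" "v \<notin> nbrs V E y"
    using assms(3) leaves by auto
  then have "nbrs V E v = {x}"
    using double_star_position_nbrs[OF assms(1,2)] assms(3) by simp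
  then show "snort_option Left f V E t v = snort_aux f (V - {v}) E t"
    using assms(2) move_leaf_own[where p = Left] by (simp add: double_star_position_def)
  show "double_star_position (V - {v}) E t x y"
    using double_star_position_Diff[OF assms(2)] v by auto
  show "nbrs (V - {v}) E x - {y} = (nbrs V E x - {y}) - {v}"
    and "nbrs (V - {v}) E y - {x} = nbrs V E y - {x}"
    using v by (auto simp: nbrs_Diff)
qed

lemma double_star_position_movable:
  assumes "symp E" and "double_star_position V E t x y"
  shows "{v \<in> V. can_move Left t v} = insert x ((nbrs V E x - {y}) \<union> (nbrs V E y - {x}))"
    and "{v \<in> V. can_move Right t v} = insert y ((nbrs V E y - {x}) \<union> (nbrs V E x - {y}))"
proof -
  note leaves = double_star_position_leaves[OF assms]
  have xy: "x \<in> V" "y \<in> V" "t x = Blue" "t y = Red"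
    and untinted: "\<And>u. u \<in> V - {x, y} \<Longrightarrow> t u = Untinted"
    using assms(2) by (auto simp: double_star_position_def nbrs_def)
  have "{v \<in> V. can_move p t v} = {v \<in> {x, y}. t v \<noteq> ocol p} \<union> (V - {x, y})" for p
  proof -
    have "t v \<noteq> ocol p" if "v \<in> V - {x, y}" for v
      using untinted[OF that] by (cases p) auto
    then show ?thesis
      using xy(1,2) unfolding can_move_def by blast
  qed
  then show "{v \<in> V. can_move Left t v} = insert x ((nbrs V E x - {y}) \<union> (nbrs V E y - {x}))"
    and "{v \<in> V. can_move Right t v} = insert y ((nbrs V E y - {x}) \<union> (nbrs V E x - {y}))"
    using xy(3,4) leaves(1) by auto
qed

lemma snort_aux_double_star:
  assumes "symp E" and "finite V" and "card V \<le> f" and "double_star_position V E t x y"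
  shows "game_eq (snort_aux f V E t)
           (double_star_game (card (nbrs V E x - {y})) (card (nbrs V E y - {x})))"
  using assms(2-4)
proof (induction f arbitrary: V t x y)
  case 0
  then show ?case
    by (simp add: double_star_position_def card_gt_0_iff)
next
  case (Suc f)
  define GL where "GL = (\<lambda>x y v. let a = card (nbrs V E x - {y}); b = card (nbrs V E y - {x}) in
      if v = x then edgeless_game a 0 b
      else if v \<in> nbrs V E x - {y} then double_star_game (a - 1) b else star_game a (b - 1))"
  have left: "game_eq (snort_option Left f V E s v) (GL x' y' v)"
    if pos: "double_star_position V E s x' y'" and v: "v \<in> V" "v \<noteq> y'" for s x' y' v
  proof -
    note leaves = double_star_position_leaves[OF assms(1) pos]
    consider "v = x'" | "v \<in> nbrs V E x' - {y'}" | "v \<in> nbrs V E y' - {x'}"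
      using leaves(1) v by blast
    then show ?thesis
    proof cases
      case 1
      then show ?thesis
        using snort_option_double_star_centre[OF assms(1) Suc.prems(1,2) pos] by (simp add: GL_def Let_def)
    next
      case 2
      have "game_eq (snort_aux f (V - {v}) E s) (double_star_game
          (card (nbrs (V - {v}) E x' - {y'})) (card (nbrs (V - {v}) E y' - {x'})))"
        using Suc.prems(1,2) card_Diff1_less[OF Suc.prems(1) v(1)]
          snort_option_double_star_own_leaf(2)[OF assms(1) pos 2]
        by (intro Suc.IH) auto
      moreover have "v \<noteq> x'"
        using 2 by (auto simp: nbrs_def)
      ultimately show ?thesis
        using 2 Suc.prems(1) snort_option_double_star_own_leaf[OF assms(1) pos 2]
        by (simp add: GL_def Let_def)
    next
      case 3
      then have "v \<noteq> x'" "v \<noteq> y'" "v \<notin> nbrs V E x'"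
        using leaves(2) by (auto simp: nbrs_def)
      then show ?thesis
        using snort_option_double_star_other_leaf[OF assms(1) Suc.prems(1,2) pos 3]
        by (simp add: GL_def Let_def)
    qed
  qed
  let ?A = "nbrs V E x - {y}" and ?B = "nbrs V E y - {x}"
  let ?a = "card ?A" and ?b = "card ?B"
  define GR where "GR = (\<lambda>v. if v = y then edgeless_game 0 ?b ?a
      else if v \<in> ?B then double_star_game ?a (?b - 1) else game_neg (star_game ?b (?a - 1)))"
  note leaves = double_star_position_leaves[OF assms(1) Suc.prems(3)]
  have colours: "t x = Blue" "t y = Red"
    using Suc.prems(3) by (simp_all add: double_star_position_def)
  show ?case
  proof (rule snort_aux_Suc_eqI[where GL = "GL x y" and GR = GR])
    show "game_eq (snort_option Left f V E t v) (GL x y v)" if "v \<in> V" "can_move Left t v" for v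
      using left[OF Suc.prems(3)] that colours by (auto simp: can_move_def)
    show "game_eq (snort_option Right f V E t v) (GR v)" if "v \<in> V" "can_move Right t v" for v
    proof -
      have "v \<noteq> x"
        using that(2) colours by (auto simp: can_move_def)
      \<comment> \<open>Right's options are the negated Left options of the colour-swapped position.\<close>
      then have "game_eq (snort_option Right f V E t v) (game_neg (GL y x v))"
        using left[OF double_star_position_tint_swap[OF assms(1) Suc.prems(3)] that(1)]
        by (simp add: snort_option_tint_swap game_eq_neg)
      moreover have "game_neg (GL y x v) = GR v"
        by (simp add: GL_def GR_def Let_def)
      ultimately show ?thesis
        by simp
    qed
    note movable = double_star_position_movable[OF assms(1) Suc.prems(3)]
    have fin: "finite ?A" "finite ?B" and "?B \<inter> ?A = {}"
      using Suc.prems(1) leaves(2) by auto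
    have centres: "x \<notin> ?A \<union> ?B" "y \<notin> ?B \<union> ?A"
      by (auto simp: nbrs_def)
    show "set (lopts (double_star_game ?a ?b)) = GL x y ` {v \<in> V. can_move Left t v}"
      and "set (ropts (double_star_game ?a ?b)) = GR ` {v \<in> V. can_move Right t v}"
      unfolding movable GL_def GR_def Let_def
        image_if_three_pieces[OF fin leaves(2) centres(1)]
        image_if_three_pieces[OF fin(2,1) \<open>?B \<inter> ?A = {}\<close> centres(2)]
      by (simp_all only: set_lopts_double_star_game set_ropts_double_star_game)
  qed (use Suc.prems(1) in simp)
qed

lemma symp_dstar_E: "symp (dstar_E n)"
  by (auto simp: symp_def dstar_E_def)

lemma nbrs_dstar_centres:
  "nbrs (dstar_V n) (dstar_E n) 0 - {1} = {2..n + 1}"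
  "nbrs (dstar_V n) (dstar_E n) 1 - {0} = {n + 2..2 * n + 1}"
  by (auto simp: nbrs_def dstar_E_def dstar_V_def)

lemma double_star_position_dstar: "double_star_position (dstar_V n) (dstar_E n) dstar_t 0 1"
proof -
  have "nbrs (dstar_V n) (dstar_E n) u = {0}" if "u \<in> {2..n + 1}" for u
    using that by (auto simp: nbrs_def dstar_E_def dstar_V_def)
  moreover have "nbrs (dstar_V n) (dstar_E n) u = {1}" if "u \<in> {n + 2..2 * n + 1}" for u
    using that by (auto simp: nbrs_def dstar_E_def dstar_V_def)
  moreover have "dstar_V n - {0, 1} = {2..n + 1} \<union> {n + 2..2 * n + 1}"
    by (auto simp: dstar_V_def)
  ultimately show ?thesis
    by (auto simp: double_star_position_def dstar_t_def dstar_V_def nbrs_def dstar_E_def)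
qed

theorem lemma5:
  fixes n :: nat
  assumes "n \<ge> 1"
  shows "(even n \<longrightarrow> game_eq (snort (dstar_V n) (dstar_E n) dstar_t)
                         (Game [game_nat n] [game_neg (game_nat n)]))
       \<and> (odd n \<longrightarrow> game_eq (snort (dstar_V n) (dstar_E n) dstar_t)
                         (Game [game_add (game_nat n) game_star]
                               [game_add (game_neg (game_nat n)) game_star]))"
proof -
  have "game_eq (snort (dstar_V n) (dstar_E n) dstar_t)
      (double_star_game (card {2..n + 1}) (card {n + 2..2 * n + 1}))"
    using snort_aux_double_star[OF symp_dstar_E _ le_refl double_star_position_dstar]
    unfolding snort_def nbrs_dstar_centres by (simp add: dstar_V_def)
  also have "double_star_game (card {2..n + 1}) (card {n + 2..2 * n + 1}) = double_star_game n n"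
    by simp
  also have "game_eq \<dots> (Game [edgeless_game n 0 n] [edgeless_game 0 n n])"
    using assms by (intro double_star_game_diag_eq) simp
  also have "game_eq \<dots> (Game [edgeless_game n 0 (n mod 2)] [edgeless_game 0 n (n mod 2)])"
    by (intro game_eq_GameI) (simp_all add: rel_set_def edgeless_game_eqI)
  finally show ?thesis
    by (auto simp: game_nat_eq_edgeless_game edgeless_game_add_star odd_iff_mod_2_eq_one)
qed

end
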